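(* Let $D$ be a finite group with $d=|D|\geq2$, and let $\overline{\Gamma}$ be the undirected graph whose vertices are the finitely supported functions $f:\Z\to D$, two vertices being adjacent iff they differ at exactly one point of $\Z$. Let $X$ be a finite subgraph of $\overline{\Gamma}$ with $V\ge1$ vertices. Then $X$ has at most $\frac{d-1}{2}V\log_d(V)$ edges, and equality holds only if $X$ is a $d$-ary hypercube, i.e. there exist a finite set $C\subset\Z$ and a finitely supported $h:\Z\to D$ such that $V(X)=\{g:g(x)=h(x)\ \forall x\notin C\}$ and $X$ contains every edge of $\overline{\Gamma}$ between vertices of $V(X)$.
   Context: A finitely supported function $f:\Z\to D$ is one with $\{x:f(x)\neq\mathrm{Id}_D\}$ finite. *)

theory Defs
  imports Complex_Main "HOL-Library.Cardinality"
begin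

text \<open>The finite group D is a type of class group_add (identity 0), finite.
  Vertices of Gamma-bar: finitely supported functions int => D.\<close>

definition fin_supp :: "(int \<Rightarrow> 'd::group_add) \<Rightarrow> bool" where
  "fin_supp f \<longleftrightarrow> finite {x. f x \<noteq> 0}"

definition gb_adj :: "(int \<Rightarrow> 'd) \<Rightarrow> (int \<Rightarrow> 'd) \<Rightarrow> bool" where
  "gb_adj f g \<longleftrightarrow> (\<exists>!x. f x \<noteq> g x)"

definition gb_edges_on :: "(int \<Rightarrow> 'd::group_add) set \<Rightarrow> (int \<Rightarrow> 'd) set set" where
  "gb_edges_on S = {{f, g} | f g. f \<in> S \<and> g \<in> S \<and> fin_supp f \<and> fin_supp g \<and> gb_adj f g}"

end

theory Submission
  imports Defs
begin

(* Induct on the number of vertices. Choose a coordinate x on which the vertex set S is not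
   constant and cut S into the fibers {f. f x = a}. Edges inside a fiber are bounded by
   induction. An edge leaving its fiber joins f to another point of the x-line through f, so f
   lies on at most beta f - 1 such edges, beta f being the size of that line, and concavity of
   log gives beta - 1 <= (d - 1) log_d beta. Writing alpha f for the size of the fiber of f, the
   total is then at most (d - 1)/2 * sum_f log_d (alpha f * beta f). A vertex is determined by
   one point of its fiber and one point of its line, so sum_f alpha f * beta f <= |S|^2, and
   ln t <= t - 1 turns this into sum_f log_d (alpha f * beta f) <= |S| log_d |S|.
   If the bound is attained, every estimate is tight: alpha f * beta f = |S| and beta f = d, so
   all x-lines are full, all their edges are present, and by induction every fiber is a cube
   carrying all its edges; hence so is S. *)

lemma log_chord_less:
  fixes b m :: real
  assumes "1 < m" "m < b"
  shows "m - 1 < (b - 1) * log b m"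
proof -
  \<comment> \<open>g vanishes at 1 and b and g' is strictly decreasing, so the mean value theorem on
    [1, m] and [m, b] makes g m positive\<close>
  define g where "g t = (b - 1) * ln t - (t - 1) * ln b" for t
  have deriv: "DERIV g t :> (b - 1) / t - ln b" if "0 < t" for t
    unfolding g_def using that by (auto intro!: derivative_eq_intros simp: field_simps)
  have "g 1 = 0" "g b = 0" by (simp_all add: g_def)
  obtain z1 where z1: "1 < z1" "z1 < m" "g m = (m - 1) * ((b - 1) / z1 - ln b)"
    using MVT2[OF assms(1), of g "\<lambda>t. (b - 1) / t - ln b"] deriv \<open>g 1 = 0\<close> by force
  obtain z2 where z2: "m < z2" "z2 < b" "- g m = (b - m) * ((b - 1) / z2 - ln b)"
    using MVT2[OF assms(2), of g "\<lambda>t. (b - 1) / t - ln b"] deriv \<open>g b = 0\<close> assms by force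
  have "(b - 1) / z2 < (b - 1) / z1"
    using z1 z2 assms by (intro divide_strict_left_mono) auto
  have "0 < (b - 1) / z1 - ln b"
  proof (rule ccontr)
    assume "\<not> ?thesis"
    then have "g m \<le> 0" "- g m < 0"
      using z1 z2 \<open>(b - 1) / z2 < (b - 1) / z1\<close> by (auto intro: mult_nonneg_nonpos mult_pos_neg)
    then show False by simp
  qed
  then have "0 < g m"
    using z1 by simp
  moreover have "0 < ln b" using assms by simp
  ultimately show ?thesis by (simp add: g_def log_def field_simps)
qed

lemma log_chord_le:
  fixes b m :: real
  assumes "1 < b" "1 \<le> m" "m \<le> b"
  shows "m - 1 \<le> (b - 1) * log b m"
  using log_chord_less[of m b] assms by (cases "m = 1 \<or> m = b") auto

lemma sum_log_le_card_mult_log: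
  fixes p :: "'i \<Rightarrow> real"
  assumes "1 < b" "finite I" "0 < N" "\<And>i. i \<in> I \<Longrightarrow> 0 < p i" "sum p I \<le> real (card I) * N"
  shows "(\<Sum>i\<in>I. log b (p i)) \<le> real (card I) * log b N"
    and "(\<Sum>i\<in>I. log b (p i)) = real (card I) * log b N \<Longrightarrow> i \<in> I \<Longrightarrow> p i = N"
proof -
  have ln_b: "0 < ln b" using assms(1) by simp
  have ln_ratio: "ln (p i / N) = ln b * (log b (p i) - log b N)" if "i \<in> I" for i
    using assms(3) assms(4)[OF that] ln_b by (simp add: log_def ln_div field_simps)
  have term_le: "ln b * (log b (p i) - log b N) \<le> p i / N - 1" if "i \<in> I" for i
    using ln_le_minus_one[of "p i / N"] assms(3) assms(4)[OF that] ln_ratio[OF that] by simp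
  have sum_lhs: "(\<Sum>i\<in>I. ln b * (log b (p i) - log b N)) = ln b * ((\<Sum>i\<in>I. log b (p i)) - real (card I) * log b N)"
    by (simp add: sum_distrib_left[symmetric] sum_subtractf)
  have sum_rhs: "(\<Sum>i\<in>I. p i / N - 1) \<le> 0"
    using assms(3,5) by (simp add: sum_subtractf sum_divide_distrib[symmetric] divide_le_eq mult.commute)
  have sum_le: "(\<Sum>i\<in>I. ln b * (log b (p i) - log b N)) \<le> (\<Sum>i\<in>I. p i / N - 1)"
    using term_le by (rule sum_mono)
  have "ln b * ((\<Sum>i\<in>I. log b (p i)) - real (card I) * log b N) \<le> 0"
    using sum_le sum_lhs sum_rhs by linarith
  then show "(\<Sum>i\<in>I. log b (p i)) \<le> real (card I) * log b N"
    using ln_b by (simp add: mult_le_0_iff)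
  assume "(\<Sum>i\<in>I. log b (p i)) = real (card I) * log b N" "i \<in> I"
  then have "ln b * (log b (p i) - log b N) = p i / N - 1"
    using sum_le sum_lhs sum_rhs by (intro sum_mono_inv[OF _ term_le _ assms(2)]) auto
  then have "ln (p i / N) = p i / N - 1"
    using ln_ratio \<open>i \<in> I\<close> by simp
  then show "p i = N"
    using ln_eq_minus_one[of "p i / N"] assms(3) assms(4)[OF \<open>i \<in> I\<close>] \<open>i \<in> I\<close> by simp
qed

definition fiber :: "('a \<Rightarrow> 'b) set \<Rightarrow> 'a \<Rightarrow> 'b \<Rightarrow> ('a \<Rightarrow> 'b) set" where
  "fiber S x a = {f \<in> S. f x = a}"

definition line :: "('a \<Rightarrow> 'b) set \<Rightarrow> 'a \<Rightarrow> ('a \<Rightarrow> 'b) \<Rightarrow> ('a \<Rightarrow> 'b) set" where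
  "line S x f = {g \<in> S. \<forall>y. y \<noteq> x \<longrightarrow> g y = f y}"

definition cube :: "'a set \<Rightarrow> ('a \<Rightarrow> 'b) \<Rightarrow> ('a \<Rightarrow> 'b) set" where
  "cube C h = {g. \<forall>y. y \<notin> C \<longrightarrow> g y = h y}"

definition cross_edges :: "('a \<Rightarrow> 'b) set set \<Rightarrow> 'a \<Rightarrow> ('a \<Rightarrow> 'b) set set" where
  "cross_edges E x = {e \<in> E. \<exists>u\<in>e. \<exists>v\<in>e. u x \<noteq> v x}"

lemma fiber_subset: "fiber S x a \<subseteq> S"
  by (auto simp: fiber_def)

lemma line_subset: "line S x f \<subseteq> S"
  by (auto simp: line_def)

lemma finite_fiber: "finite S \<Longrightarrow> finite (fiber S x a)"
  by (rule finite_subset[OF fiber_subset])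

lemma finite_line: "finite S \<Longrightarrow> finite (line S x f)"
  by (rule finite_subset[OF line_subset])

lemma line_subset_range_upd: "line S x f \<subseteq> range (\<lambda>a. f(x := a))"
proof
  fix g assume "g \<in> line S x f"
  then have "g = f(x := g x)" by (auto simp: line_def fun_eq_iff)
  then show "g \<in> range (\<lambda>a. f(x := a))" by blast
qed

lemma card_line_le: "card (line S x f) \<le> CARD('b)"
  for f :: "'a \<Rightarrow> 'b::finite"
proof -
  have "card (line S x f) \<le> card (range (\<lambda>a. f(x := a)))"
    by (intro card_mono line_subset_range_upd) simp
  also have "\<dots> \<le> CARD('b)" by (rule card_image_le) simp
  finally show ?thesis .
qed

lemma card_line_ge_1:
  assumes "finite S" "f \<in> S"
  shows "1 \<le> card (line S x f)"
proof -
  have "f \<in> line S x f" using assms(2) by (simp add: line_def)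
  then show ?thesis using finite_line[OF assms(1)] by (simp add: Suc_le_eq card_gt_0_iff) blast
qed

lemma card_fiber_less:
  assumes "finite S" "f \<in> S" "g \<in> S" "f x \<noteq> g x"
  shows "card (fiber S x a) < card S"
proof -
  have "fiber S x a \<noteq> S"
    using assms(2-4) unfolding fiber_def by (metis (mono_tags, lifting) mem_Collect_eq)
  then show ?thesis using assms(1) fiber_subset by (metis psubsetI psubset_card_mono)
qed

lemma sum_by_fiber:
  fixes g :: "'b::finite \<Rightarrow> 'c::comm_semiring_1"
  assumes "finite S"
  shows "(\<Sum>f\<in>S. g (f x)) = (\<Sum>a\<in>UNIV. of_nat (card (fiber S x a)) * g a)"
proof -
  have "(\<Sum>f\<in>S. g (f x)) = (\<Sum>a\<in>UNIV. \<Sum>f\<in>fiber S x a. g (f x))"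
    using sum.group[OF assms, of UNIV "\<lambda>f. f x" "\<lambda>f. g (f x)"] by (simp add: fiber_def)
  also have "\<dots> = (\<Sum>a\<in>UNIV. of_nat (card (fiber S x a)) * g a)"
    by (intro sum.cong refl) (simp add: fiber_def)
  finally show ?thesis .
qed

(* A vertex is determined by its value at x and its values off x, so the triples (f, g, h)
   with g in the fiber and h on the line through f inject into S \<times> S. *)

lemma sum_card_fiber_mult_card_line_le:
  assumes "finite S"
  shows "(\<Sum>f\<in>S. card (fiber S x (f x)) * card (line S x f)) \<le> card S * card S"
proof -
  let ?T = "SIGMA f:S. fiber S x (f x) \<times> line S x f"
  have "(\<Sum>f\<in>S. card (fiber S x (f x)) * card (line S x f)) = card ?T"
    using assms by (simp add: card_SigmaI card_cartesian_product finite_fiber finite_line)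
  also have "\<dots> \<le> card (S \<times> S)"
  proof (rule card_inj_on_le)
    show "inj_on snd ?T"
    proof (rule inj_onI)
      fix p q assume p: "p \<in> ?T" and q: "q \<in> ?T" and "snd p = snd q"
      obtain f g h f' where "p = (f, g, h)" "q = (f', g, h)"
        using \<open>snd p = snd q\<close> by (cases p, cases q) auto
      with p q have "f x = f' x" "\<forall>y. y \<noteq> x \<longrightarrow> f y = f' y"
        by (auto simp: fiber_def line_def)
      then have "f = f'" by (metis ext)
      with \<open>p = (f, g, h)\<close> \<open>q = (f', g, h)\<close> show "p = q" by simp
    qed
    show "snd ` ?T \<subseteq> S \<times> S" using fiber_subset line_subset by fastforce
  qed (use assms in simp)
  finally show ?thesis by (simp add: card_cartesian_product)
qed

lemma sum_log_card_fiber_line_le: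
  assumes "1 < b" "finite S" "S \<noteq> {}"
  shows "(\<Sum>f\<in>S. log b (card (fiber S x (f x)))) + (\<Sum>f\<in>S. log b (card (line S x f)))
      \<le> card S * log b (card S)"
    and "(\<Sum>f\<in>S. log b (card (fiber S x (f x)))) + (\<Sum>f\<in>S. log b (card (line S x f)))
        = card S * log b (card S)
      \<Longrightarrow> f \<in> S \<Longrightarrow> card (fiber S x (f x)) * card (line S x f) = card S"
proof -
  define p where "p f = real (card (fiber S x (f x))) * real (card (line S x f))" for f
  have p_pos: "0 < p f" if "f \<in> S" for f
  proof -
    have "f \<in> fiber S x (f x)" using that by (simp add: fiber_def)
    then have "0 < card (fiber S x (f x))"
      using finite_fiber[OF assms(2)] card_gt_0_iff by blast
    then show ?thesis
      using card_line_ge_1[OF assms(2) that, where x = x] by (simp add: p_def)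
  qed
  have sum_log: "(\<Sum>f\<in>S. log b (p f))
      = (\<Sum>f\<in>S. log b (card (fiber S x (f x)))) + (\<Sum>f\<in>S. log b (card (line S x f)))"
    using p_pos by (simp add: p_def log_mult_pos sum.distrib[symmetric] zero_less_mult_iff)
  have "(\<Sum>f\<in>S. card (fiber S x (f x)) * card (line S x f)) \<le> card S * card S"
    using assms(2) by (rule sum_card_fiber_mult_card_line_le)
  then have "real (\<Sum>f\<in>S. card (fiber S x (f x)) * card (line S x f)) \<le> real (card S * card S)"
    by (rule of_nat_mono)
  then have sum_p: "sum p S \<le> real (card S) * real (card S)"
    by (simp add: p_def)
  have card_pos: "0 < real (card S)"
    using assms(2,3) by (simp add: card_gt_0_iff)
  show "(\<Sum>f\<in>S. log b (card (fiber S x (f x)))) + (\<Sum>f\<in>S. log b (card (line S x f)))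
      \<le> card S * log b (card S)"
    using sum_log_le_card_mult_log(1)[OF assms(1,2) card_pos p_pos sum_p] sum_log by simp
  assume "(\<Sum>f\<in>S. log b (card (fiber S x (f x)))) + (\<Sum>f\<in>S. log b (card (line S x f)))
      = card S * log b (card S)" and "f \<in> S"
  then have "p f = real (card S)"
    using sum_log_le_card_mult_log(2)[OF assms(1,2) card_pos p_pos sum_p] sum_log by simp
  then show "card (fiber S x (f x)) * card (line S x f) = card S"
    unfolding p_def of_nat_mult[symmetric] of_nat_eq_iff .
qed

lemma line_eq_range_upd:
  fixes S :: "('a \<Rightarrow> 'b::finite) set"
  assumes "finite S" "f0 \<in> S" "g0 \<in> S" "f0 x \<noteq> g0 x" "f \<in> S"
    and "card (fiber S x (f x)) * card (line S x f) = card S" "card (line S x f) \<in> {1, CARD('b)}"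
  shows "line S x f = range (\<lambda>a. f(x := a))"
proof -
  have "card (line S x f) \<noteq> 1"
  proof
    assume "card (line S x f) = 1"
    then have "card (fiber S x (f x)) = card S" using assms(6) by simp
    then show False
      using card_fiber_less[OF assms(1-4), of "f x"] by simp
  qed
  then have "card (range (\<lambda>a. f(x := a))) \<le> card (line S x f)"
    using assms(7) card_image_le[of UNIV "\<lambda>a. f(x := a)"] by auto
  then show ?thesis
    by (intro card_seteq line_subset_range_upd) simp_all
qed

lemma closed_upd_fiber_cube:
  assumes closed: "\<And>f a. f \<in> S \<Longrightarrow> f(x := a) \<in> S" and fib: "fiber S x a = cube C h"
  shows "S = cube (insert x C) h"
proof
  have "h \<in> fiber S x a" unfolding fib by (simp add: cube_def)
  then have "h x = a" by (simp add: fiber_def)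
  show "S \<subseteq> cube (insert x C) h"
  proof
    fix g assume "g \<in> S"
    then have "g(x := a) \<in> fiber S x a" using closed[of g a] by (simp add: fiber_def)
    then have "\<forall>y. y \<notin> C \<longrightarrow> (g(x := a)) y = h y" unfolding fib by (simp add: cube_def)
    then show "g \<in> cube (insert x C) h" by (simp add: cube_def) metis
  qed
  show "cube (insert x C) h \<subseteq> S"
  proof
    fix g assume "g \<in> cube (insert x C) h"
    then have "g(x := a) \<in> fiber S x a" unfolding fib using \<open>h x = a\<close> by (simp add: cube_def)
    then have "(g(x := a))(x := g x) \<in> S" using closed fiber_subset by (metis subsetD)
    then show "g \<in> S" by simp
  qed
qed

lemma gb_edges_onE:
  assumes "e \<in> gb_edges_on S"
  obtains u v where "e = {u, v}" "u \<in> S" "v \<in> S" "u \<noteq> v" "\<exists>!z. u z \<noteq> v z"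
proof -
  from assms obtain u v where uv: "e = {u, v}" "u \<in> S" "v \<in> S" "gb_adj u v"
    unfolding gb_edges_on_def by blast
  then have "\<exists>!z. u z \<noteq> v z" by (simp add: gb_adj_def)
  then have "u \<noteq> v" by auto
  with uv \<open>\<exists>!z. u z \<noteq> v z\<close> that show thesis by blast
qed

lemma gb_edges_on_Pow: "gb_edges_on S \<subseteq> Pow S"
  by (auto simp: gb_edges_on_def)

lemma card_gb_edge: "e \<in> gb_edges_on S \<Longrightarrow> card e = 2"
  by (erule gb_edges_onE) simp

lemma gb_edges_on_subset: "T \<subseteq> S \<Longrightarrow> gb_edges_on T = {e \<in> gb_edges_on S. e \<subseteq> T}"
  by (auto simp: gb_edges_on_def)

lemma gb_edges_on_trivial: "\<forall>f\<in>S. \<forall>g\<in>S. f = g \<Longrightarrow> gb_edges_on S = {}"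
  by (auto elim: gb_edges_onE)

lemma fiber_edges_subset:
  "E \<subseteq> gb_edges_on S \<Longrightarrow> {e \<in> E. e \<subseteq> fiber S x a} \<subseteq> gb_edges_on (fiber S x a)"
  using gb_edges_on_subset[OF fiber_subset] by blast

lemma sum_card_incident_eq:
  fixes F :: "'a set set"
  assumes "finite S" and edges: "\<And>e. e \<in> F \<Longrightarrow> e \<subseteq> S \<and> card e = 2"
  shows "(\<Sum>v\<in>S. card {e \<in> F. v \<in> e}) = 2 * card F"
proof -
  have "finite F"
    by (rule finite_subset[of F "Pow S"]) (use edges assms(1) in auto)
  then have "(\<Sum>v\<in>S. card {e \<in> F. v \<in> e}) = (\<Sum>v\<in>S. \<Sum>e\<in>F. if v \<in> e then 1 else 0)"
    by (simp add: sum.If_cases Int_def conj_commute)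
  also have "\<dots> = (\<Sum>e\<in>F. card e)"
    using assms by (subst sum.swap) (simp add: sum.If_cases Int_absorb1)
  also have "\<dots> = 2 * card F"
    using edges by simp
  finally show ?thesis .
qed

lemma card_le_sum_fiber_edges_cross_edges:
  fixes E :: "('a \<Rightarrow> 'b::finite) set set"
  assumes "finite E" "E \<subseteq> Pow S"
  shows "card E \<le> (\<Sum>a\<in>UNIV. card {e \<in> E. e \<subseteq> fiber S x a}) + card (cross_edges E x)"
proof -
  have "E \<subseteq> (\<Union>a. {e \<in> E. e \<subseteq> fiber S x a}) \<union> cross_edges E x"
  proof
    fix e assume "e \<in> E"
    show "e \<in> (\<Union>a. {e \<in> E. e \<subseteq> fiber S x a}) \<union> cross_edges E x"
    proof (cases "e \<in> cross_edges E x")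
      case False
      then have agree: "\<forall>u\<in>e. \<forall>v\<in>e. u x = v x" using \<open>e \<in> E\<close> by (auto simp: cross_edges_def)
      have "\<exists>a. e \<subseteq> fiber S x a"
      proof (cases "e = {}")
        case False
        then obtain u where "u \<in> e" by blast
        then have "e \<subseteq> fiber S x (u x)"
          using agree \<open>e \<in> E\<close> assms(2) by (auto simp: fiber_def)
        then show ?thesis by blast
      qed simp
      then show ?thesis using \<open>e \<in> E\<close> by blast
    qed simp
  qed
  then have "card E \<le> card ((\<Union>a. {e \<in> E. e \<subseteq> fiber S x a}) \<union> cross_edges E x)"
    using assms(1) by (intro card_mono) (auto simp: cross_edges_def)
  also have "\<dots> \<le> card (\<Union>a. {e \<in> E. e \<subseteq> fiber S x a}) + card (cross_edges E x)"
    by (rule card_Un_le)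
  also have "\<dots> \<le> (\<Sum>a\<in>UNIV. card {e \<in> E. e \<subseteq> fiber S x a}) + card (cross_edges E x)"
    using card_UN_le[of UNIV "\<lambda>a. {e \<in> E. e \<subseteq> fiber S x a}"] by simp
  finally show ?thesis .
qed

lemma cross_edges_at_subset:
  assumes "E \<subseteq> gb_edges_on S" "f \<in> S"
  shows "{e \<in> cross_edges E x. f \<in> e} \<subseteq> (\<lambda>g. {f, g}) ` (line S x f - {f})"
proof
  fix e assume e: "e \<in> {e \<in> cross_edges E x. f \<in> e}"
  then have "e \<in> gb_edges_on S" using assms(1) by (auto simp: cross_edges_def)
  then obtain u v where uv: "e = {u, v}" "u \<in> S" "v \<in> S" "u \<noteq> v" "\<exists>!z. u z \<noteq> v z"
    by (rule gb_edges_onE)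
  then have "u x \<noteq> v x" using e by (auto simp: cross_edges_def)
  then have "\<forall>y. y \<noteq> x \<longrightarrow> u y = v y" using uv(5) by blast
  then have "v \<in> line S x u - {u}" "u \<in> line S x v - {v}"
    using uv by (auto simp: line_def)
  moreover have "f = u \<or> f = v" using e uv(1) by auto
  ultimately show "e \<in> (\<lambda>g. {f, g}) ` (line S x f - {f})"
    using uv(1) by (auto simp: insert_commute)
qed

lemma card_cross_edges_at:
  assumes "finite S" "E \<subseteq> gb_edges_on S" "f \<in> S"
  shows "card {e \<in> cross_edges E x. f \<in> e} \<le> card (line S x f) - 1"
    and "card {e \<in> cross_edges E x. f \<in> e} = card (line S x f) - 1 \<Longrightarrow> g \<in> line S x f - {f}
      \<Longrightarrow> {f, g} \<in> E"
proof -
  let ?L = "(\<lambda>g. {f, g}) ` (line S x f - {f})"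
  have sub: "{e \<in> cross_edges E x. f \<in> e} \<subseteq> ?L"
    using assms(2,3) by (rule cross_edges_at_subset)
  have fin: "finite ?L" using finite_line[OF assms(1)] by simp
  have "f \<in> line S x f" using assms(3) by (simp add: line_def)
  then have card_L: "card ?L \<le> card (line S x f) - 1"
    using card_image_le[of "line S x f - {f}"] finite_line[OF assms(1)] by simp
  show "card {e \<in> cross_edges E x. f \<in> e} \<le> card (line S x f) - 1"
    using card_mono[OF fin sub] card_L by linarith
  assume "card {e \<in> cross_edges E x. f \<in> e} = card (line S x f) - 1" "g \<in> line S x f - {f}"
  then have "{e \<in> cross_edges E x. f \<in> e} = ?L"
    using card_seteq[OF fin sub] card_L by simp
  then show "{f, g} \<in> E"
    using \<open>g \<in> line S x f - {f}\<close> by (auto simp: cross_edges_def)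
qed

lemma card_cross_edges_at_le_log:
  fixes S :: "(int \<Rightarrow> 'd::{finite, group_add}) set"
  assumes "CARD('d) \<ge> 2" "finite S" "E \<subseteq> gb_edges_on S" "f \<in> S"
  shows "real (card {e \<in> cross_edges E x. f \<in> e})
      \<le> (real CARD('d) - 1) * log (real CARD('d)) (real (card (line S x f)))"
    and "real (card {e \<in> cross_edges E x. f \<in> e})
        = (real CARD('d) - 1) * log (real CARD('d)) (real (card (line S x f)))
      \<Longrightarrow> card (line S x f) \<in> {1, CARD('d)}
        \<and> card {e \<in> cross_edges E x. f \<in> e} = card (line S x f) - 1"
proof -
  define D where "D = real CARD('d)"
  define \<delta> where "\<delta> = real (card {e \<in> cross_edges E x. f \<in> e})"
  define \<beta> where "\<beta> = real (card (line S x f))"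
  have \<beta>_range: "1 \<le> \<beta>" "\<beta> \<le> D"
    using card_line_ge_1[OF assms(2,4), where x = x] card_line_le[of S x f]
    by (simp_all add: \<beta>_def D_def)
  have "card {e \<in> cross_edges E x. f \<in> e} + 1 \<le> card (line S x f)"
    using card_cross_edges_at(1)[OF assms(2-4), where x = x]
      card_line_ge_1[OF assms(2,4), where x = x] by linarith
  then have \<delta>_le: "\<delta> \<le> \<beta> - 1" unfolding \<delta>_def \<beta>_def by linarith
  have \<beta>_le: "\<beta> - 1 \<le> (D - 1) * log D \<beta>"
    using log_chord_le \<beta>_range assms(1) by (simp add: D_def)
  show "real (card {e \<in> cross_edges E x. f \<in> e})
      \<le> (real CARD('d) - 1) * log (real CARD('d)) (real (card (line S x f)))"
    using \<delta>_le \<beta>_le by (simp add: \<delta>_def \<beta>_def D_def)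
  assume "real (card {e \<in> cross_edges E x. f \<in> e})
      = (real CARD('d) - 1) * log (real CARD('d)) (real (card (line S x f)))"
  then have "\<delta> = \<beta> - 1" and tight: "\<beta> - 1 = (D - 1) * log D \<beta>"
    using \<delta>_le \<beta>_le by (simp_all add: \<delta>_def \<beta>_def D_def)
  moreover have "\<beta> = 1 \<or> \<beta> = D"
  proof (rule ccontr)
    assume "\<not> ?thesis"
    then have "1 < \<beta>" "\<beta> < D" using \<beta>_range by auto
    then have "\<beta> - 1 < (D - 1) * log D \<beta>" by (rule log_chord_less)
    then show False using tight by simp
  qed
  ultimately show "card (line S x f) \<in> {1, CARD('d)}
      \<and> card {e \<in> cross_edges E x. f \<in> e} = card (line S x f) - 1"
    by (auto simp: \<delta>_def \<beta>_def D_def of_nat_diff)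
qed

lemma card_cross_edges_le:
  fixes S :: "(int \<Rightarrow> 'd::{finite, group_add}) set"
  assumes "CARD('d) \<ge> 2" "finite S" "E \<subseteq> gb_edges_on S"
  shows "2 * real (card (cross_edges E x))
      \<le> (real CARD('d) - 1) * (\<Sum>f\<in>S. log (real CARD('d)) (real (card (line S x f))))"
    and "2 * real (card (cross_edges E x))
        = (real CARD('d) - 1) * (\<Sum>f\<in>S. log (real CARD('d)) (real (card (line S x f))))
      \<Longrightarrow> f \<in> S \<Longrightarrow> card (line S x f) \<in> {1, CARD('d)}
        \<and> card {e \<in> cross_edges E x. f \<in> e} = card (line S x f) - 1"
proof -
  define \<delta> where "\<delta> f = real (card {e \<in> cross_edges E x. f \<in> e})" for f
  define bound where "bound f = (real CARD('d) - 1) * log (real CARD('d)) (real (card (line S x f)))" for f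
  have edge: "e \<subseteq> S \<and> card e = 2" if "e \<in> cross_edges E x" for e
  proof -
    have "e \<in> gb_edges_on S" using that assms(3) by (auto simp: cross_edges_def)
    then show ?thesis using gb_edges_on_Pow[of S] card_gb_edge by auto
  qed
  have "(\<Sum>f\<in>S. card {e \<in> cross_edges E x. f \<in> e}) = 2 * card (cross_edges E x)"
    using assms(2) edge by (rule sum_card_incident_eq)
  then have "real (\<Sum>f\<in>S. card {e \<in> cross_edges E x. f \<in> e}) = real (2 * card (cross_edges E x))"
    by (rule arg_cong)
  then have handshake: "2 * real (card (cross_edges E x)) = (\<Sum>f\<in>S. \<delta> f)"
    by (simp add: \<delta>_def)
  have \<delta>_le: "\<delta> f \<le> bound f" if "f \<in> S" for f
    unfolding \<delta>_def bound_def by (rule card_cross_edges_at_le_log(1)[OF assms that])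
  have sum_bound: "(\<Sum>f\<in>S. bound f)
      = (real CARD('d) - 1) * (\<Sum>f\<in>S. log (real CARD('d)) (real (card (line S x f))))"
    by (simp add: bound_def sum_distrib_left)
  show "2 * real (card (cross_edges E x))
      \<le> (real CARD('d) - 1) * (\<Sum>f\<in>S. log (real CARD('d)) (real (card (line S x f))))"
  proof -
    have "(\<Sum>f\<in>S. \<delta> f) \<le> (\<Sum>f\<in>S. bound f)" using \<delta>_le by (rule sum_mono)
    then show ?thesis using handshake sum_bound by simp
  qed
  assume "2 * real (card (cross_edges E x))
      = (real CARD('d) - 1) * (\<Sum>f\<in>S. log (real CARD('d)) (real (card (line S x f))))"
    and "f \<in> S"
  then have "\<delta> f = bound f"
    using sum_mono_inv[of \<delta> S bound] \<delta>_le handshake sum_bound assms(2) by simp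
  then show "card (line S x f) \<in> {1, CARD('d)}
      \<and> card {e \<in> cross_edges E x. f \<in> e} = card (line S x f) - 1"
    unfolding \<delta>_def bound_def by (rule card_cross_edges_at_le_log(2)[OF assms \<open>f \<in> S\<close>])
qed

lemma gb_edges_on_subset_fibers_lines:
  assumes "\<And>a. gb_edges_on (fiber S x a) \<subseteq> E"
    and "\<And>f g. f \<in> S \<Longrightarrow> g \<in> line S x f - {f} \<Longrightarrow> {f, g} \<in> E"
  shows "gb_edges_on S \<subseteq> E"
proof
  fix e assume "e \<in> gb_edges_on S"
  then obtain u v where uv: "e = {u, v}" "u \<in> S" "v \<in> S" "u \<noteq> v" "\<exists>!z. u z \<noteq> v z"
    by (rule gb_edges_onE)
  show "e \<in> E"
  proof (cases "u x = v x")
    case True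
    then have "e \<subseteq> fiber S x (u x)" using uv by (auto simp: fiber_def)
    then have "e \<in> gb_edges_on (fiber S x (u x))"
      using gb_edges_on_subset[OF fiber_subset] \<open>e \<in> gb_edges_on S\<close> by blast
    then show ?thesis using assms(1) by blast
  next
    case False
    then have "\<forall>y. y \<noteq> x \<longrightarrow> u y = v y" using uv(5) by blast
    then have "v \<in> line S x u - {u}" using uv by (auto simp: line_def)
    then show ?thesis using assms(2) uv(1,2) by blast
  qed
qed

(* Since log b 0 = 0, edge_bound d 0 = 0: empty fibers contribute nothing. *)
definition edge_bound :: "nat \<Rightarrow> nat \<Rightarrow> real" where
  "edge_bound d n = (real d - 1) / 2 * real n * log (real d) (real n)"

definition edge_excess :: "('a \<Rightarrow> 'b::finite) set set \<Rightarrow> ('a \<Rightarrow> 'b) set \<Rightarrow> real" where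
  "edge_excess E S = real (card E) - edge_bound CARD('b) (card S)"

lemma edge_bound_nonneg: "2 \<le> d \<Longrightarrow> 0 \<le> edge_bound d n"
  by (cases "n = 0") (auto simp: edge_bound_def intro!: mult_nonneg_nonneg)

lemma sum_edge_bound_fibers:
  fixes S :: "('a \<Rightarrow> 'b::finite) set"
  assumes "finite S"
  shows "(\<Sum>a\<in>UNIV. edge_bound d (card (fiber S x a)))
    = (real d - 1) / 2 * (\<Sum>f\<in>S. log (real d) (real (card (fiber S x (f x)))))"
  using sum_by_fiber[OF assms, of "\<lambda>a. log (real d) (real (card (fiber S x a)))" x]
  by (simp add: edge_bound_def sum_distrib_left mult_ac)

lemma edge_excess_split:
  fixes S :: "(int \<Rightarrow> 'd::{finite, group_add}) set"
  assumes "CARD('d) \<ge> 2" "finite S" "S \<noteq> {}" "E \<subseteq> gb_edges_on S"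
  shows "edge_excess E S \<le> (\<Sum>a\<in>UNIV. edge_excess {e \<in> E. e \<subseteq> fiber S x a} (fiber S x a))"
    and "edge_excess E S = (\<Sum>a\<in>UNIV. edge_excess {e \<in> E. e \<subseteq> fiber S x a} (fiber S x a))
      \<Longrightarrow> f \<in> S \<Longrightarrow> card (fiber S x (f x)) * card (line S x f) = card S
        \<and> card (line S x f) \<in> {1, CARD('d)}
        \<and> card {e \<in> cross_edges E x. f \<in> e} = card (line S x f) - 1"
proof -
  define D where "D = real CARD('d)"
  define c where "c = (D - 1) / 2"
  define L\<alpha> where "L\<alpha> = (\<Sum>f\<in>S. log D (card (fiber S x (f x))))"
  define L\<beta> where "L\<beta> = (\<Sum>f\<in>S. log D (card (line S x f)))"
  have D_gt_1: "1 < D" using assms(1) by (simp add: D_def)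
  have "E \<subseteq> Pow S" using assms(4) gb_edges_on_Pow by blast
  then have "finite E" using finite_subset assms(2) by auto
  have split: "real (card E)
      \<le> (\<Sum>a\<in>UNIV. real (card {e \<in> E. e \<subseteq> fiber S x a})) + real (card (cross_edges E x))"
    using of_nat_mono[OF card_le_sum_fiber_edges_cross_edges[OF \<open>finite E\<close> \<open>E \<subseteq> Pow S\<close>, of x]]
    by simp
  have cross: "2 * real (card (cross_edges E x)) \<le> 2 * (c * L\<beta>)"
    using card_cross_edges_le(1)[OF assms(1,2,4)] by (simp add: c_def D_def L\<beta>_def)
  have fibers: "(\<Sum>a\<in>UNIV. edge_bound CARD('d) (card (fiber S x a))) = c * L\<alpha>"
    using sum_edge_bound_fibers[OF assms(2), of "CARD('d)" x] by (simp add: c_def D_def L\<alpha>_def)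
  have bound_S: "edge_bound CARD('d) (card S) = c * (card S * log D (card S))"
    by (simp add: edge_bound_def c_def D_def)
  have "L\<alpha> + L\<beta> \<le> card S * log D (card S)"
    using sum_log_card_fiber_line_le(1)[OF D_gt_1 assms(2,3)] by (simp add: L\<alpha>_def L\<beta>_def)
  then have gibbs: "c * L\<alpha> + c * L\<beta> \<le> c * (card S * log D (card S))"
    using D_gt_1 by (simp add: c_def flip: distrib_left)
  then show "edge_excess E S \<le> (\<Sum>a\<in>UNIV. edge_excess {e \<in> E. e \<subseteq> fiber S x a} (fiber S x a))"
    using split cross by (simp add: edge_excess_def sum_subtractf fibers bound_S)
  assume "edge_excess E S = (\<Sum>a\<in>UNIV. edge_excess {e \<in> E. e \<subseteq> fiber S x a} (fiber S x a))"
    and "f \<in> S"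
  then have "real (card E) - c * (card S * log D (card S))
      = (\<Sum>a\<in>UNIV. real (card {e \<in> E. e \<subseteq> fiber S x a})) - c * L\<alpha>"
    by (simp add: edge_excess_def sum_subtractf fibers bound_S)
  then have "c * L\<alpha> + c * L\<beta> = c * (card S * log D (card S))"
    and "2 * real (card (cross_edges E x)) = 2 * (c * L\<beta>)"
    using split cross gibbs by linarith+
  then have "L\<alpha> + L\<beta> = card S * log D (card S)" and cross_tight: "2 * real (card (cross_edges E x))
      = (real CARD('d) - 1) * (\<Sum>f\<in>S. log (real CARD('d)) (real (card (line S x f))))"
    using D_gt_1 by (simp_all add: c_def D_def L\<beta>_def flip: distrib_left)
  then have "(\<Sum>f\<in>S. log D (card (fiber S x (f x)))) + (\<Sum>f\<in>S. log D (card (line S x f)))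
      = card S * log D (card S)"
    by (simp add: L\<alpha>_def L\<beta>_def)
  then have "card (fiber S x (f x)) * card (line S x f) = card S"
    by (rule sum_log_card_fiber_line_le(2)[OF D_gt_1 assms(2,3) _ \<open>f \<in> S\<close>])
  then show "card (fiber S x (f x)) * card (line S x f) = card S
      \<and> card (line S x f) \<in> {1, CARD('d)} \<and> card {e \<in> cross_edges E x. f \<in> e} = card (line S x f) - 1"
    using card_cross_edges_le(2)[OF assms(1,2,4) cross_tight \<open>f \<in> S\<close>] by simp
qed

lemma card_gb_edges_le:
  fixes S :: "(int \<Rightarrow> 'd::{finite, group_add}) set"
  assumes "CARD('d) \<ge> 2" "finite S" "E \<subseteq> gb_edges_on S"
  shows "real (card E) \<le> edge_bound CARD('d) (card S)"
  using assms(2,3)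
proof (induction "card S" arbitrary: S E rule: less_induct)
  case (less S E)
  show ?case
  proof (cases "\<exists>f\<in>S. \<exists>g\<in>S. \<exists>x. f x \<noteq> g x")
    case True
    then obtain f g x where fg: "f \<in> S" "g \<in> S" "f x \<noteq> g x" by blast
    have "edge_excess {e \<in> E. e \<subseteq> fiber S x a} (fiber S x a) \<le> 0" for a
      using less.hyps[OF card_fiber_less[OF less.prems(1) fg] finite_fiber[OF less.prems(1)]
          fiber_edges_subset[OF less.prems(2)]] by (simp add: edge_excess_def)
    then have "(\<Sum>a\<in>UNIV. edge_excess {e \<in> E. e \<subseteq> fiber S x a} (fiber S x a)) \<le> 0"
      by (rule sum_nonpos)
    moreover have "S \<noteq> {}" using fg by blast
    ultimately show ?thesis
      using edge_excess_split(1)[OF assms(1) less.prems(1) _ less.prems(2), of x]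
      by (simp add: edge_excess_def)
  next
    case False
    then have "gb_edges_on S = {}" by (intro gb_edges_on_trivial) (auto simp: fun_eq_iff)
    then show ?thesis using less.prems(2) edge_bound_nonneg[OF assms(1)] by simp
  qed
qed

lemma edge_excess_eq_0_split:
  fixes S :: "(int \<Rightarrow> 'd::{finite, group_add}) set"
  assumes "CARD('d) \<ge> 2" "finite S" "E \<subseteq> gb_edges_on S" "edge_excess E S = 0"
    and "f0 \<in> S" "g0 \<in> S" "f0 x \<noteq> g0 x"
  shows "edge_excess {e \<in> E. e \<subseteq> fiber S x a} (fiber S x a) = 0"
    and "f \<in> S \<Longrightarrow> f(x := a) \<in> S"
    and "f \<in> S \<Longrightarrow> g \<in> line S x f - {f} \<Longrightarrow> {f, g} \<in> E"
proof -
  let ?excess = "\<lambda>a. edge_excess {e \<in> E. e \<subseteq> fiber S x a} (fiber S x a)"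
  have "S \<noteq> {}" using assms(5) by blast
  have excess_le: "?excess a \<le> 0" for a
    using card_gb_edges_le[OF assms(1) finite_fiber[OF assms(2)] fiber_edges_subset[OF assms(3)]]
    by (simp add: edge_excess_def)
  have "0 \<le> (\<Sum>a\<in>UNIV. ?excess a)"
    using edge_excess_split(1)[OF assms(1,2) \<open>S \<noteq> {}\<close> assms(3), of x] assms(4) by simp
  moreover have "(\<Sum>a\<in>UNIV. ?excess a) \<le> 0"
    by (rule sum_nonpos) (rule excess_le)
  ultimately have sum_excess: "(\<Sum>a\<in>UNIV. ?excess a) = 0" by linarith
  show "?excess a = 0"
    by (rule sum_mono_inv[where f = ?excess and g = "\<lambda>_. 0" and I = UNIV])
      (use sum_excess excess_le in simp_all)
  have "edge_excess E S = (\<Sum>a\<in>UNIV. ?excess a)"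
    using sum_excess assms(4) by simp
  note tight = edge_excess_split(2)[OF assms(1,2) \<open>S \<noteq> {}\<close> assms(3) this]
  show "f(x := a) \<in> S" if "f \<in> S"
  proof -
    have "line S x f = range (\<lambda>a. f(x := a))"
      using tight[OF that] by (intro line_eq_range_upd[OF assms(2,5-7) that]) auto
    then have "f(x := a) \<in> line S x f" by simp
    then show ?thesis using line_subset[of S x f] by blast
  qed
  show "{f, g} \<in> E" if "f \<in> S" "g \<in> line S x f - {f}"
    using card_cross_edges_at(2)[OF assms(2,3) that(1)] tight[OF that(1)] that(2) by blast
qed

lemma card_gb_edges_eq_imp_cube:
  fixes S :: "(int \<Rightarrow> 'd::{finite, group_add}) set"
  assumes "CARD('d) \<ge> 2" "finite S" "S \<noteq> {}" "E \<subseteq> gb_edges_on S"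
    and "real (card E) = edge_bound CARD('d) (card S)"
  shows "\<exists>C h. finite C \<and> S = cube C h \<and> gb_edges_on S \<subseteq> E"
  using assms(2-5)
proof (induction "card S" arbitrary: S E rule: less_induct)
  case (less S E)
  show ?case
  proof (cases "\<exists>f\<in>S. \<exists>g\<in>S. \<exists>x. f x \<noteq> g x")
    case False
    then have trivial: "\<forall>f\<in>S. \<forall>g\<in>S. f = g" by (auto simp: fun_eq_iff)
    obtain h where "h \<in> S" using less.prems(2) by blast
    with trivial have "S = {h}" by blast
    moreover have "cube {} h = {h}" by (simp add: cube_def fun_eq_iff[symmetric])
    ultimately show ?thesis using gb_edges_on_trivial[OF trivial] by blast
  next
    case True
    then obtain f0 g0 x where f0g0: "f0 \<in> S" "g0 \<in> S" "f0 x \<noteq> g0 x" by blast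
    have "edge_excess E S = 0" using less.prems(4) by (simp add: edge_excess_def)
    note tight = edge_excess_eq_0_split[OF assms(1) less.prems(1,3) this f0g0]
    have fiber_cube: "\<exists>C h. finite C \<and> fiber S x a = cube C h \<and> gb_edges_on (fiber S x a) \<subseteq> E" for a
    proof -
      have "f0(x := a) \<in> fiber S x a" using tight(2)[OF f0g0(1)] by (simp add: fiber_def)
      then have "fiber S x a \<noteq> {}" by blast
      moreover have "real (card {e \<in> E. e \<subseteq> fiber S x a}) = edge_bound CARD('d) (card (fiber S x a))"
        using tight(1)[of a] by (simp add: edge_excess_def)
      ultimately show ?thesis
        using less.hyps[OF card_fiber_less[OF less.prems(1) f0g0] finite_fiber[OF less.prems(1)]
            _ fiber_edges_subset[OF less.prems(3)]]
        by fastforce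
    qed
    then obtain C h where "finite C" "fiber S x (f0 x) = cube C h" by blast
    then have "S = cube (insert x C) h" using tight(2) by (intro closed_upd_fiber_cube) auto
    moreover have "gb_edges_on S \<subseteq> E"
    proof (rule gb_edges_on_subset_fibers_lines)
      show "gb_edges_on (fiber S x a) \<subseteq> E" for a using fiber_cube by blast
      show "{f, g} \<in> E" if "f \<in> S" "g \<in> line S x f - {f}" for f g using tight(3) that .
    qed
    ultimately show ?thesis using \<open>finite C\<close> by blast
  qed
qed

theorem mainTheorem6:
  fixes VX :: "(int \<Rightarrow> 'd::{finite, group_add}) set"
    and EdX :: "(int \<Rightarrow> 'd) set set"
  assumes "CARD('d) \<ge> 2"
    and "\<forall>f\<in>VX. fin_supp f"
    and "finite VX"
    and "card VX \<ge> 1"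
    and "EdX \<subseteq> gb_edges_on VX"
  shows "real (card EdX) \<le> (real CARD('d) - 1) / 2 * real (card VX) * log (real CARD('d)) (real (card VX))
    \<and> (real (card EdX) = (real CARD('d) - 1) / 2 * real (card VX) * log (real CARD('d)) (real (card VX))
       \<longrightarrow> (\<exists>C h. finite C \<and> fin_supp h \<and>
              VX = {g. \<forall>x. x \<notin> C \<longrightarrow> g x = h x} \<and>
              gb_edges_on VX \<subseteq> EdX))"
proof (intro conjI impI)
  show "real (card EdX) \<le> (real CARD('d) - 1) / 2 * real (card VX) * log (real CARD('d)) (real (card VX))"
    using card_gb_edges_le[OF assms(1,3,5)] by (simp add: edge_bound_def)
  assume "real (card EdX) = (real CARD('d) - 1) / 2 * real (card VX) * log (real CARD('d)) (real (card VX))"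
  moreover have "VX \<noteq> {}" using assms(4) by auto
  ultimately obtain C h where "finite C" "VX = cube C h" "gb_edges_on VX \<subseteq> EdX"
    using card_gb_edges_eq_imp_cube[OF assms(1,3) _ assms(5)] by (auto simp: edge_bound_def)
  moreover have "fin_supp h"
    using assms(2) \<open>VX = cube C h\<close> by (auto simp: cube_def)
  ultimately show "\<exists>C h. finite C \<and> fin_supp h \<and> VX = {g. \<forall>x. x \<notin> C \<longrightarrow> g x = h x} \<and> gb_edges_on VX \<subseteq> EdX"
    unfolding cube_def by blast
qed

end
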